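(* Assume $I_\delta=0$. There exists a constant $C_{\mathcal{G}}$, independent of $\delta$ (and of $c\in[c_0,c_1]$ and $R_0\in\mathcal{R}_c$), such that for every $\delta$-admissible $S\in\mathsf{X}$ and $G=\mathcal{G}(S)$, $$\|\mathcal{A}G\|_\infty\le C_{\mathcal{G}}\,\delta,\qquad \|\mathcal{A}^2G\|_\infty\le C_{\mathcal{G}}\big(1+\|S''\|_\infty\big)\delta^2 .$$
   Context: $(\mathcal{A}F)(x)=\int_{x-1/2}^{x+1/2}F(s)\,ds$, $\Delta_1F(x)=F(x+1)-2F(x)+F(x-1)$, $a(k)=\frac{\sin(k/2)}{k/2}$, $\Psi_0'(r)=\mathrm{sgn}(r)$. Potentials: $(\Psi_\delta)_{\delta>0}$ is a family of $C^2$ functions such that $\Psi_\delta'(r)=\mathrm{sgn}(r)$ for $r\notin(-\delta,\delta)$, and $|\Psi_\delta'|\le C_\Psi$, $|\Psi_\delta''|\le C_\Psi/\delta$ on $\mathbb{R}$ with $C_\Psi$ independent of $\delta$; $I_\delta:=\frac12\int_{\mathbb{R}}(\Psi_\delta'-\Psi_0')\,dr$. Unperturbed waves (standing hypothesis, a known result): there are constants $0<c_0<1$ and $x_0,r_0,d_0,D_0>0$ such that for every $c\in[c_0,1)$ the equation $a(k)=c$ has exactly one positive solution $k_c$, and there is a two-parameter family $\mathcal{R}_c$ of functions $R_0\in W^{2,\infty}(\mathbb{R})$ solving $c^2R_0''=\Delta_1(R_0-\mathrm{sgn}(R_0))$ with $R_0(0)=0$, given by $R_0=\bar R_0+\alpha(\cos(k_c\cdot)-1)+\beta\sin(k_c\cdot)$,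 $(\alpha,\beta)$ in an open neighbourhood $U_c$ of $0\in\mathbb{R}^2$, where $\bar R_0$ is a fixed member for which $\lim_{x\to+\infty}\bar R_0(x)$ exists and $\lim_{x\to-\infty}(\bar R_0(x)-\alpha_c^-(\cos(k_cx)-1)-\beta_c^-\sin(k_cx))$ exists for some constants $\alpha_c^-,\beta_c^-$. Every $R_0\in\mathcal{R}_c$ satisfies $\|R_0\|_\infty\le D_0(1-c^2)^{-1}$, $R_0(x)>r_0$ for $x>x_0$, $R_0(x)<-r_0$ for $x<-x_0$, $R_0'(x)>d_0$ for $|x|<x_0$. Setting: $c_1\in(c_0,1)$ fixed, $c\in[c_0,c_1]$, $R_0\in\mathcal{R}_c$ fixed. $\mathsf{X}:=\{S\in W^{2,\infty}(\mathbb{R}):S(0)=0,\ \lim_{x\to+\infty}S(x)\text{ exists}\}$. $\mathcal{G}(S)(x):=\Psi_\delta'(R_0(x)+S(x))-\Psi_0'(R_0(x))$. $S\in\mathsf{X}$ is called $\delta$-admissible if there exist $x_-<0<x_+$ with: $R_0(x_\pm)+S(x_\pm)=\pm\delta$; $R_0(x)+S(x)<-\delta$ for $x<x_-$; $R_0(x)+S(x)>\delta$ for $x>x_+$; and $\frac12R_0'(0)<R_0'(x)+S'(x)<2R_0'(0)$ for $x_-<x<x_+$. *)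

theory Defs
  imports "HOL-Analysis.Analysis"
begin

definition Aop :: "(real \<Rightarrow> real) \<Rightarrow> real \<Rightarrow> real" where
  "Aop F x = integral {x - 1/2 .. x + 1/2} F"

definition Delta1 :: "(real \<Rightarrow> real) \<Rightarrow> real \<Rightarrow> real" where
  "Delta1 F x = F (x + 1) - 2 * F x + F (x - 1)"

definition afun :: "real \<Rightarrow> real" where
  "afun k = sin (k / 2) / (k / 2)"

text \<open>Sup norm (used only for bounded functions).\<close>
definition supnorm :: "(real \<Rightarrow> real) \<Rightarrow> real" where
  "supnorm f = (SUP x. \<bar>f x\<bar>)"

text \<open>W^{2,\<infinity>}(R): f, f' bounded, f differentiable everywhere, f' Lipschitz
  (i.e. f'' \<in> L^\<infinity>).\<close>
definition W2inf :: "(real \<Rightarrow> real) \<Rightarrow> bool" where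
  "W2inf f \<longleftrightarrow> bounded (range f) \<and> (\<forall>x. f differentiable (at x)) \<and>
     bounded (range (deriv f)) \<and> (\<exists>L. L-lipschitz_on UNIV (deriv f))"

text \<open>\<parallel>f''\<parallel>_\<infinity> for f \<in> W^{2,\<infinity>}: the best Lipschitz constant of f'.\<close>
definition d2norm :: "(real \<Rightarrow> real) \<Rightarrow> real" where
  "d2norm f = Inf {L. L-lipschitz_on UNIV (deriv f)}"

definition Xspace :: "(real \<Rightarrow> real) set" where
  "Xspace = {S. W2inf S \<and> S 0 = 0 \<and> (\<exists>l. (S \<longlongrightarrow> l) at_top)}"

definition admissible :: "real \<Rightarrow> (real \<Rightarrow> real) \<Rightarrow> (real \<Rightarrow> real) \<Rightarrow> bool" where
  "admissible \<delta> R0 S \<longleftrightarrow> (\<exists>xm xp. xm < 0 \<and> 0 < xp \<and>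
     R0 xp + S xp = \<delta> \<and> R0 xm + S xm = - \<delta> \<and>
     (\<forall>x<xm. R0 x + S x < - \<delta>) \<and> (\<forall>x>xp. R0 x + S x > \<delta>) \<and>
     (\<forall>x. xm < x \<and> x < xp \<longrightarrow>
        deriv R0 0 / 2 < deriv R0 x + deriv S x \<and> deriv R0 x + deriv S x < 2 * deriv R0 0))"

text \<open>Weak (integrated) form of c^2 R0'' = Delta1(R0 - sgn R0).\<close>
definition solves_wave :: "real \<Rightarrow> (real \<Rightarrow> real) \<Rightarrow> bool" where
  "solves_wave c R0 \<longleftrightarrow> (\<forall>x y. x \<le> y \<longrightarrow>
     c\<^sup>2 * (deriv R0 y - deriv R0 x) = integral {x..y} (Delta1 (\<lambda>s. R0 s - sgn (R0 s))))"

definition Rfam :: "(real \<Rightarrow> real) \<Rightarrow> real \<Rightarrow> (real \<times> real) set \<Rightarrow> (real \<Rightarrow> real) set" where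
  "Rfam Rbar k U = {(\<lambda>x. Rbar x + \<alpha> * (cos (k * x) - 1) + \<beta> * sin (k * x)) | \<alpha> \<beta>. (\<alpha>, \<beta>) \<in> U}"

end

theory Submission
  imports Defs
begin

text \<open>
  Smoothing the potential perturbs the wave equation by the defect
  \<open>G = \<Psi>\<^sub>\<delta>'(R\<^sub>0 + S) - sgn R\<^sub>0\<close>.  For \<open>\<delta>\<close>-admissible \<open>S\<close> the profile \<open>R = R\<^sub>0 + S\<close> crosses
  \<open>[-\<delta>, \<delta>]\<close> once, on an interval \<open>[xm, xp]\<close> of width \<open>O(\<delta>)\<close> (its slope is bounded below), and
  \<open>G\<close> is bounded and supported there; this gives \<open>\<A>G = O(\<delta>)\<close>.  For \<open>\<A>\<^sup>2G\<close> one needs the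
  total integral of \<open>G\<close> to be \<open>O(\<delta>\<^sup>2)\<close>: since \<open>I\<^sub>\<delta> = 0\<close>, \<open>G R'\<close> is the derivative of
  \<open>(\<Psi>\<^sub>\<delta> - \<bar>\<cdot>\<bar>) \<circ> R\<close>, whose values at the ends of the layer coincide, so \<open>\<integral>G R' = 0\<close>;
  as \<open>R'\<close> is Lipschitz (constant \<open>K\<^sub>0 + \<parallel>S''\<parallel>\<close>), \<open>\<integral>G\<close> differs from \<open>\<integral>G R'/R'(0) = 0\<close> by
  \<open>O((1 + \<parallel>S''\<parallel>) \<delta>\<^sup>2)\<close>.

  Finally the
  family \<open>\<R>\<^sub>c\<close> is shown to supply such layers uniformly: the wave equation makes \<open>R\<^sub>0'\<close>
  Lipschitz uniformly in \<open>c \<in> [c\<^sub>0, c\<^sub>1]\<close>, and admissibility provides the crossing.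
\<close>

text \<open>The absolute value of an integral is bounded by the integral of a majorant.  No
  integrability of the integrand is required, since non-integrable functions have integral 0.\<close>
lemma abs_integral_le:
  fixes f g :: "real \<Rightarrow> real"
  assumes "\<And>x. x \<in> S \<Longrightarrow> \<bar>f x\<bar> \<le> g x" "g integrable_on S"
  shows "\<bar>integral S f\<bar> \<le> integral S g"
proof (cases "f integrable_on S")
  case True
  then show ?thesis using integral_norm_bound_integral[OF True assms(2)] assms(1) by simp
next
  case False
  then have "integral S f = 0" by (rule not_integrable_integral)
  moreover have "0 \<le> integral S g"
    using assms by (intro integral_nonneg) (auto intro: order_trans[OF abs_ge_zero])
  ultimately show ?thesis by simp
qed

lemma step_function_integral:
  fixes a b u v M :: real
  assumes "u \<le> v" "0 \<le> M"
  shows "(\<lambda>y. if y \<in> {u..v} then M else 0) integrable_on {a..b}"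
    and "integral {a..b} (\<lambda>y. if y \<in> {u..v} then M else 0) \<le> M * (v - u)"
proof -
  have meet: "{u..v} \<inter> {a..b} = {max a u .. min b v}" by auto
  show "(\<lambda>y. if y \<in> {u..v} then M else 0) integrable_on {a..b}"
    unfolding integrable_restrict_Int meet by auto
  have "integral {a..b} (\<lambda>y. if y \<in> {u..v} then M else 0) = integral {max a u .. min b v} (\<lambda>y. M)"
    unfolding integral_restrict_Int meet by simp
  also have "\<dots> \<le> (v - u) * M"
    using assms by (cases "max a u \<le> min b v") (auto intro!: mult_right_mono)
  finally show "integral {a..b} (\<lambda>y. if y \<in> {u..v} then M else 0) \<le> M * (v - u)"
    by (simp add: mult.commute)
qed

lemma integral_vanishing:
  fixes f :: "real \<Rightarrow> real"
  assumes "\<And>y. y \<in> S \<Longrightarrow> f y = 0"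
  shows "integral S f = 0"
  using integral_cong[of S f "\<lambda>_. 0"] assms by simp

lemma abs_has_real_derivative_sgn:
  fixes x :: real
  assumes "x \<noteq> 0"
  shows "(abs has_real_derivative sgn x) (at x)"
proof (cases "x > 0")
  case True
  have "((\<lambda>y. y) has_real_derivative 1) (at x)" by (rule DERIV_ident)
  then have "(abs has_real_derivative 1) (at x)"
    by (rule has_field_derivative_transform_within_open[where S="{0<..}"]) (use True in auto)
  then show ?thesis using True by simp
next
  case False
  then have x: "x < 0" using assms by simp
  have "((\<lambda>y. - y) has_real_derivative - 1) (at x)" by (rule derivative_intros DERIV_ident)+
  then have "(abs has_real_derivative - 1) (at x)"
    by (rule has_field_derivative_transform_within_open[where S="{..<0}"]) (use x in auto)
  then show ?thesis using x by simp
qed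

text \<open>\<open>sgn\<close> is integrable on bounded intervals (it is the derivative of \<open>\<bar>r\<bar>\<close> off 0).\<close>
lemma sgn_integrable: "(sgn :: real \<Rightarrow> real) integrable_on {a..b}"
proof (cases "a \<le> b")
  case True
  have "(sgn has_integral (\<bar>b\<bar> - \<bar>a\<bar>)) {a..b}"
  proof (rule fundamental_theorem_of_calculus_interior_strong[where S="{0}"])
    show "continuous_on {a..b} abs" by (intro continuous_intros)
    fix x :: real assume "x \<in> {a<..<b} - {0}"
    then show "(abs has_vector_derivative sgn x) (at x)"
      using abs_has_real_derivative_sgn[of x]
      by (auto simp: has_real_derivative_iff_has_vector_derivative)
  qed (use True in auto)
  then show ?thesis by blast
next
  case False
  then show ?thesis by (simp add: integrable_on_empty)
qed

lemma sgn_eq_of_crossing: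
  fixes f f' :: "real \<Rightarrow> real"
  assumes deriv: "\<And>x. (f has_real_derivative f' x) (at x)" and zero: "f 0 = 0"
    and ab: "a < 0" "0 < b" and incr: "\<And>x. a < x \<Longrightarrow> x < b \<Longrightarrow> f' x > 0"
    and right: "\<And>x. x > b \<Longrightarrow> f x > 0" and left: "\<And>x. x < a \<Longrightarrow> f x < 0"
  shows "sgn (f y) = sgn y"
proof -
  consider "y > b" | "0 < y" "y \<le> b" | "y = 0" | "a \<le> y" "y < 0" | "y < a" by linarith
  then show ?thesis
  proof cases
    case 2
    obtain z where "0 < z" "z < y" "f y - f 0 = (y - 0) * f' z"
      using MVT2[of 0 y f f'] 2 deriv by auto
    moreover have "f' z > 0" using incr 2 ab \<open>0 < z\<close> \<open>z < y\<close> by auto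
    ultimately show ?thesis using zero 2 by simp
  next
    case 4
    obtain z where "y < z" "z < 0" "f 0 - f y = (0 - y) * f' z"
      using MVT2[of y 0 f f'] 4 deriv by auto
    moreover have "f' z > 0" using incr 4 ab \<open>y < z\<close> \<open>z < 0\<close> by auto
    ultimately have "f y < 0" using zero 4 by (simp add: mult_neg_pos)
    then show ?thesis using 4 by simp
  qed (use right left zero ab in auto)
qed

lemma d2norm_lipschitz:
  assumes "W2inf S"
  shows "d2norm S \<ge> 0" and "\<bar>deriv S y - deriv S x\<bar> \<le> d2norm S * \<bar>y - x\<bar>"
proof -
  define A where "A = {L. L-lipschitz_on UNIV (deriv S)}"
  have ne: "A \<noteq> {}" using assms by (auto simp: W2inf_def A_def)
  have nn: "\<And>L. L \<in> A \<Longrightarrow> 0 \<le> L" by (auto simp: A_def intro: lipschitz_on_nonneg)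
  show "d2norm S \<ge> 0" unfolding d2norm_def A_def[symmetric] by (rule cInf_greatest[OF ne nn])
  show "\<bar>deriv S y - deriv S x\<bar> \<le> d2norm S * \<bar>y - x\<bar>"
  proof (cases "y = x")
    case False
    then have pos: "\<bar>y - x\<bar> > 0" by simp
    have "\<bar>deriv S y - deriv S x\<bar> / \<bar>y - x\<bar> \<le> Inf A"
    proof (rule cInf_greatest[OF ne])
      fix L assume "L \<in> A"
      then have "dist (deriv S y) (deriv S x) \<le> L * dist y x"
        by (auto simp: A_def intro: lipschitz_onD)
      then show "\<bar>deriv S y - deriv S x\<bar> / \<bar>y - x\<bar> \<le> L"
        using pos by (simp add: dist_real_def divide_le_eq)
    qed
    then show ?thesis using pos by (simp add: d2norm_def A_def divide_le_eq)
  qed simp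
qed

lemma supnorm_le:
  assumes "\<And>x. \<bar>f x\<bar> \<le> B"
  shows "supnorm f \<le> B"
  unfolding supnorm_def by (rule cSUP_least) (use assms in auto)

context
  fixes G :: "real \<Rightarrow> real" and a b M :: real
  assumes G_int: "\<And>u v. G integrable_on {u..v}"
    and G_supp: "\<And>y. y \<le> a \<or> y \<ge> b \<Longrightarrow> G y = 0"
    and G_bound: "\<And>y. \<bar>G y\<bar> \<le> M"
    and a_le_b: "a \<le> b"
begin

lemma integral_supported_bound: "\<bar>integral {u..v} G\<bar> \<le> M * (b - a)"
proof -
  have M0: "0 \<le> M" using G_bound[of 0] by linarith
  have "\<bar>integral {u..v} G\<bar> \<le> integral {u..v} (\<lambda>y. if y \<in> {a..b} then M else 0)"
    by (rule abs_integral_le) (use G_supp G_bound step_function_integral(1) a_le_b M0 in auto)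
  also have "\<dots> \<le> M * (b - a)" by (rule step_function_integral(2)[OF a_le_b M0])
  finally show ?thesis .
qed

lemma average_off_support:
  assumes "t + 1/2 \<le> a \<or> t - 1/2 \<ge> b"
  shows "Aop G t = 0"
  unfolding Aop_def by (rule integral_vanishing) (use assms G_supp in auto)

lemma average_over_support:
  assumes "t - 1/2 \<le> a" "b \<le> t + 1/2"
  shows "Aop G t = integral {a..b} G"
proof -
  have "integral {t - 1/2..a} G = 0" "integral {b..t + 1/2} G = 0"
    by (rule integral_vanishing, use G_supp in auto)+
  moreover have "integral {t - 1/2..a} G + integral {a..t + 1/2} G = integral {t - 1/2..t + 1/2} G"
    "integral {a..b} G + integral {b..t + 1/2} G = integral {a..t + 1/2} G"
    using assms a_le_b G_int by (auto intro!: Henstock_Kurzweil_Integration.integral_combine)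
  ultimately show ?thesis by (simp add: Aop_def)
qed

lemma average_supported_majorant:
  "\<bar>Aop G t\<bar> \<le> \<bar>integral {a..b} G\<bar> + (if t \<in> {a - 1/2..b - 1/2} then M * (b - a) else 0)
     + (if t \<in> {a + 1/2..b + 1/2} then M * (b - a) else 0)"
proof -
  have P0: "0 \<le> M * (b - a)" using G_bound[of 0] a_le_b by simp
  have near: "\<bar>Aop G t\<bar> \<le> M * (b - a)" unfolding Aop_def by (rule integral_supported_bound)
  consider "t - 1/2 \<in> {a..b} \<or> t + 1/2 \<in> {a..b}" | "t + 1/2 \<le> a \<or> t - 1/2 \<ge> b"
    | "t - 1/2 \<le> a" "b \<le> t + 1/2" by fastforce
  then show ?thesis
  proof cases
    case 1
    then have "t \<in> {a + 1/2..b + 1/2} \<or> t \<in> {a - 1/2..b - 1/2}" by auto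
    then show ?thesis using near P0 by auto
  next
    case 2
    then show ?thesis using average_off_support P0 by simp
  next
    case 3
    then show ?thesis using average_over_support P0 by simp
  qed
qed

lemma double_average_supported_bound:
  "\<bar>Aop (Aop G) x\<bar> \<le> \<bar>integral {a..b} G\<bar> + 2 * M * (b - a)\<^sup>2"
proof -
  define P where "P = M * (b - a)"
  define J where "J = {x - 1/2..x + 1/2}"
  define step where "step s t = (if t \<in> {a + s..b + s} then P else 0)" for s t
  define B where "B t = \<bar>integral {a..b} G\<bar> + step (- 1/2) t + step (1/2) t" for t
  have P0: "0 \<le> P" using G_bound[of 0] a_le_b by (simp add: P_def)
  have step_int: "step s integrable_on J" and step_le: "integral J (step s) \<le> P * (b - a)" for s
    unfolding step_def J_def using step_function_integral[of "a + s" "b + s" P] a_le_b P0 by auto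
  have const_int: "(\<lambda>t. \<bar>integral {a..b} G\<bar>) integrable_on J" by (simp add: J_def integrable_const_ivl)
  have majorant: "\<bar>Aop G t\<bar> \<le> B t" for t
    using average_supported_majorant[of t] unfolding B_def step_def P_def by (simp split: if_splits; linarith)
  have "\<bar>Aop (Aop G) x\<bar> \<le> integral J B"
    unfolding Aop_def[of "Aop G"] J_def[symmetric]
    by (rule abs_integral_le[OF majorant])
      (unfold B_def, intro integrable_add const_int step_int)
  also have "integral J B = \<bar>integral {a..b} G\<bar> + integral J (step (- 1/2)) + integral J (step (1/2))"
    unfolding B_def
    by (simp add: integral_add integrable_add const_int step_int) (simp add: J_def)
  also have "\<dots> \<le> \<bar>integral {a..b} G\<bar> + 2 * M * (b - a)\<^sup>2"
    using step_le[of "- 1/2"] step_le[of "1/2"] by (simp add: P_def power2_eq_square)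
  finally show ?thesis .
qed

end

text \<open>The hypothesis \<open>I\<^sub>\<delta> = 0\<close> says that \<open>\<Psi>\<^sub>\<delta> - \<bar>r\<bar>\<close> takes the same value at
  \<open>\<delta>\<close> and \<open>-\<delta>\<close>; equivalently \<open>\<Psi>\<^sub>\<delta>\<close> is even at the edges of the smoothing layer.\<close>
lemma balanced_potential_symmetric:
  fixes Psi dPsi :: "real \<Rightarrow> real" and \<delta> :: real
  assumes Psi_deriv: "\<And>r. (Psi has_real_derivative dPsi r) (at r)"
    and dPsi_sgn: "\<And>r. \<bar>r\<bar> \<ge> \<delta> \<Longrightarrow> dPsi r = sgn r"
    and balanced: "integral UNIV (\<lambda>r. dPsi r - sgn r) = 0"
    and \<delta>_pos: "\<delta> > 0"
  shows "Psi \<delta> = Psi (- \<delta>)"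
proof -
  have Psi_cont: "continuous_on UNIV Psi"
    using Psi_deriv by (meson DERIV_isCont continuous_at_imp_continuous_on)
  have "((\<lambda>r. dPsi r - sgn r) has_integral ((Psi \<delta> - \<bar>\<delta>\<bar>) - (Psi (- \<delta>) - \<bar>- \<delta>\<bar>))) {- \<delta>..\<delta>}"
  proof (rule fundamental_theorem_of_calculus_interior_strong[where S="{0}"])
    show "continuous_on {- \<delta>..\<delta>} (\<lambda>r. Psi r - \<bar>r\<bar>)"
      by (intro continuous_intros continuous_on_subset[OF Psi_cont]) auto
    fix r :: real assume "r \<in> {- \<delta><..<\<delta>} - {0}"
    then show "((\<lambda>r. Psi r - \<bar>r\<bar>) has_vector_derivative dPsi r - sgn r) (at r)"
      using DERIV_diff[OF Psi_deriv abs_has_real_derivative_sgn, of r]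
      by (auto simp: has_real_derivative_iff_has_vector_derivative)
  qed (use \<delta>_pos in auto)
  moreover have "integral {- \<delta>..\<delta>} (\<lambda>r. dPsi r - sgn r) = 0"
  proof -
    have "integral {- \<delta>..\<delta>} (\<lambda>r. dPsi r - sgn r)
        = integral UNIV (\<lambda>r. if r \<in> {- \<delta>..\<delta>} then dPsi r - sgn r else 0)"
      using integral_restrict_Int[where S="{- \<delta>..\<delta>}" and T=UNIV and f="\<lambda>r. dPsi r - sgn r"] by simp
    also have "\<dots> = integral UNIV (\<lambda>r. dPsi r - sgn r)"
      by (rule integral_cong) (use dPsi_sgn in auto)
    finally show ?thesis using balanced by simp
  qed
  ultimately show ?thesis using \<delta>_pos by (simp add: integral_unique)
qed

locale transition_layer =
  fixes Psi dPsi R R' :: "real \<Rightarrow> real" and \<delta> C \<sigma> K xm xp :: real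
  assumes Psi_deriv: "\<And>r. (Psi has_real_derivative dPsi r) (at r)"
    and dPsi_cont: "continuous_on UNIV dPsi"
    and dPsi_sgn: "\<And>r. \<bar>r\<bar> \<ge> \<delta> \<Longrightarrow> dPsi r = sgn r"
    and dPsi_bound: "\<And>r. \<bar>dPsi r\<bar> \<le> C"
    and dPsi_balanced: "integral UNIV (\<lambda>r. dPsi r - sgn r) = 0"
    and \<delta>_pos: "\<delta> > 0"
    and R_deriv: "\<And>x. (R has_real_derivative R' x) (at x)"
    and R'_lipschitz: "\<And>x y. \<bar>R' y - R' x\<bar> \<le> K * \<bar>y - x\<bar>"
    and R_zero: "R 0 = 0"
    and layer: "xm < 0" "0 < xp" "R xm = - \<delta>" "R xp = \<delta>"
    and R_left: "\<And>x. x < xm \<Longrightarrow> R x < - \<delta>"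
    and R_right: "\<And>x. x > xp \<Longrightarrow> R x > \<delta>"
    and R'_slope: "\<And>x. xm < x \<Longrightarrow> x < xp \<Longrightarrow> R' x > \<sigma>"
    and \<sigma>_pos: "\<sigma> > 0"
begin

text \<open>The defect \<open>\<G>(S)\<close> of the paper, with \<open>R = R\<^sub>0 + S\<close> and \<open>sgn R\<^sub>0 = sgn\<close>.\<close>
definition G :: "real \<Rightarrow> real" where "G y = dPsi (R y) - sgn y"

lemma sgn_R: "sgn (R y) = sgn y"
proof (rule sgn_eq_of_crossing[OF R_deriv R_zero layer(1,2)])
  show "R' x > 0" if "xm < x" "x < xp" for x using R'_slope[OF that] \<sigma>_pos by linarith
qed (use R_left R_right \<delta>_pos in force)+

text \<open>Outside the layer \<open>\<bar>R\<bar> \<ge> \<delta>\<close>, so there \<open>G\<close> vanishes.\<close>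
lemma G_outside: "y \<le> xm \<or> y \<ge> xp \<Longrightarrow> G y = 0"
proof -
  assume y: "y \<le> xm \<or> y \<ge> xp"
  have "\<bar>R y\<bar> \<ge> \<delta>"
    using y R_left[of y] R_right[of y] layer by (cases "y = xm \<or> y = xp") auto
  then show "G y = 0" using dPsi_sgn sgn_R by (simp add: G_def)
qed

lemma G_bound: "\<bar>G y\<bar> \<le> C + 1"
  using dPsi_bound[of "R y"] by (auto simp: G_def sgn_real_def)

lemma R_cont: "continuous_on UNIV R"
  using R_deriv by (meson DERIV_isCont continuous_at_imp_continuous_on)

lemma G_integrable: "G integrable_on {u..v}"
proof -
  have "continuous_on {u..v} (\<lambda>y. dPsi (R y))"
    using continuous_on_compose2[OF dPsi_cont R_cont] by (auto intro: continuous_on_subset)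
  then show ?thesis
    unfolding G_def[abs_def] by (intro integrable_diff integrable_continuous_interval sgn_integrable)
qed

lemmas G_supported = G_integrable G_outside G_bound

text \<open>The layer is thin: \<open>R\<close> rises by \<open>2\<delta>\<close> across it with slope at least \<open>\<sigma>\<close>.\<close>
lemma width_bound: "xp - xm \<le> 2 * \<delta> / \<sigma>"
proof -
  obtain z where z: "xm < z" "z < xp" "R xp - R xm = (xp - xm) * R' z"
    using MVT2[of xm xp R R'] layer R_deriv by auto
  have "(xp - xm) * \<sigma> \<le> (xp - xm) * R' z"
    using R'_slope[OF z(1,2)] layer by (intro mult_left_mono) auto
  then show ?thesis using z layer \<sigma>_pos by (simp add: field_simps)
qed

lemma average_bound: "\<bar>Aop G x\<bar> \<le> (C + 1) * (2 * \<delta> / \<sigma>)"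
proof -
  have "\<bar>Aop G x\<bar> \<le> (C + 1) * (xp - xm)"
    unfolding Aop_def by (rule integral_supported_bound[OF G_supported]) (use layer in auto)
  also have "\<dots> \<le> (C + 1) * (2 * \<delta> / \<sigma>)"
    using width_bound G_bound[of 0] by (intro mult_left_mono) auto
  finally show ?thesis .
qed

text \<open>The cancellation: \<open>G R'\<close> is the derivative of \<open>\<Gamma> \<circ> R\<close> with
  \<open>\<Gamma>(r) = \<Psi>(r) - \<bar>r\<bar>\<close>, and \<open>\<Gamma>(\<delta>) = \<Gamma>(-\<delta>)\<close> by the balance condition.\<close>
lemma G_weighted_integral: "((\<lambda>y. G y * R' y) has_integral 0) {xm..xp}"
proof -
  define \<Gamma> where "\<Gamma> r = Psi r - \<bar>r\<bar>" for r
  have \<Gamma>_cont: "continuous_on UNIV \<Gamma>"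
    unfolding \<Gamma>_def using Psi_deriv
    by (intro continuous_intros) (meson DERIV_isCont continuous_at_imp_continuous_on)
  have "((\<lambda>y. G y * R' y) has_integral (\<Gamma> (R xp) - \<Gamma> (R xm))) {xm..xp}"
  proof (rule fundamental_theorem_of_calculus_interior_strong[where S="{0}"])
    show "continuous_on {xm..xp} (\<lambda>y. \<Gamma> (R y))"
      using continuous_on_compose2[OF \<Gamma>_cont R_cont] by (auto intro: continuous_on_subset)
    fix y :: real assume "y \<in> {xm<..<xp} - {0}"
    then have "R y \<noteq> 0" using sgn_R[of y] by (auto simp: sgn_0_0)
    then have "(\<Gamma> has_real_derivative dPsi (R y) - sgn (R y)) (at (R y))"
      unfolding \<Gamma>_def[abs_def] by (intro DERIV_diff Psi_deriv abs_has_real_derivative_sgn)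
    from DERIV_chain[OF this R_deriv]
    show "((\<lambda>y. \<Gamma> (R y)) has_vector_derivative G y * R' y) (at y)"
      by (simp add: has_real_derivative_iff_has_vector_derivative G_def sgn_R o_def)
  qed (use layer in auto)
  moreover have "\<Gamma> (R xp) = \<Gamma> (R xm)"
    using balanced_potential_symmetric[OF Psi_deriv dPsi_sgn dPsi_balanced \<delta>_pos] layer
    by (simp add: \<Gamma>_def)
  ultimately show ?thesis by simp
qed

lemma K_nonneg: "K \<ge> 0"
  using order_trans[OF abs_ge_zero R'_lipschitz[of 0 1]] by simp

text \<open>Hence \<open>\<integral>G = \<integral>G (R'(0) - R')/R'(0)\<close>; since \<open>R'\<close> is Lipschitz this is quadratic in
  the width of the layer.\<close>
lemma G_total_integral: "\<bar>integral {xm..xp} G\<bar> \<le> (C + 1) * K * (xp - xm)\<^sup>2 / \<sigma>"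
proof -
  have R'0: "R' 0 > \<sigma>" using R'_slope layer by simp
  define Q where "Q = (C + 1) * K * (xp - xm) / \<sigma>"
  have weighted: "((\<lambda>y. G y * R' y / R' 0) has_integral 0) {xm..xp}"
    using has_integral_divide[OF G_weighted_integral, of "R' 0"] by simp
  have "integral {xm..xp} G = integral {xm..xp} (\<lambda>y. G y - G y * R' y / R' 0)"
    using integral_diff[OF G_integrable has_integral_integrable[OF weighted]]
      integral_unique[OF weighted] by simp
  also have "\<bar>\<dots>\<bar> \<le> integral {xm..xp} (\<lambda>y. Q)"
  proof (rule abs_integral_le)
    fix y assume y: "y \<in> {xm..xp}"
    have "\<bar>R' 0 - R' y\<bar> \<le> K * \<bar>0 - y\<bar>" by (rule R'_lipschitz)
    also have "\<dots> \<le> K * (xp - xm)" using y layer K_nonneg by (intro mult_left_mono) auto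
    finally have "\<bar>R' 0 - R' y\<bar> \<le> K * (xp - xm)" .
    moreover have "G y - G y * R' y / R' 0 = G y * (R' 0 - R' y) / R' 0"
      using R'0 \<sigma>_pos by (simp add: field_simps)
    ultimately have "\<bar>G y - G y * R' y / R' 0\<bar> \<le> (C + 1) * (K * (xp - xm)) / R' 0"
      using G_bound[of y] R'0 \<sigma>_pos
      by (auto simp: abs_mult intro!: divide_right_mono mult_mono)
    also have "\<dots> \<le> Q"
      unfolding Q_def using R'0 \<sigma>_pos G_bound[of y] K_nonneg layer
      by (subst mult.assoc, intro divide_left_mono) auto
    finally show "\<bar>G y - G y * R' y / R' 0\<bar> \<le> Q" .
  qed auto
  also have "\<dots> = (C + 1) * K * (xp - xm)\<^sup>2 / \<sigma>"
    using layer by (simp add: Q_def power2_eq_square)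
  finally show ?thesis .
qed

lemma double_average_bound: "\<bar>Aop (Aop G) x\<bar> \<le> (C + 1) * (K / \<sigma> + 2) * (2 * \<delta> / \<sigma>)\<^sup>2"
proof -
  have "\<bar>Aop (Aop G) x\<bar> \<le> \<bar>integral {xm..xp} G\<bar> + 2 * (C + 1) * (xp - xm)\<^sup>2"
    by (rule double_average_supported_bound[OF G_supported]) (use layer in auto)
  also have "\<dots> \<le> (C + 1) * (K / \<sigma> + 2) * (xp - xm)\<^sup>2"
    using G_total_integral by (simp add: field_simps)
  also have "\<dots> \<le> (C + 1) * (K / \<sigma> + 2) * (2 * \<delta> / \<sigma>)\<^sup>2"
    using width_bound layer G_bound[of 0] K_nonneg \<sigma>_pos
    by (intro mult_left_mono power_mono) auto
  finally show ?thesis .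
qed

end

lemma wave_derivative_lipschitz:
  fixes R0 :: "real \<Rightarrow> real" and c c0 D :: real
  assumes wave: "solves_wave c R0" and c0: "0 < c0" "c0 \<le> c" and bounded: "\<And>s. \<bar>R0 s\<bar> \<le> D"
  shows "\<bar>deriv R0 y - deriv R0 x\<bar> \<le> 4 * (D + 1) / c0\<^sup>2 * \<bar>y - x\<bar>"
proof -
  define u where "u t = R0 t - sgn (R0 t)" for t
  have u_bound: "\<bar>u t\<bar> \<le> D + 1" for t
    using bounded[of t] by (auto simp: u_def sgn_real_def)
  have force_bound: "\<bar>Delta1 (\<lambda>s. R0 s - sgn (R0 s)) s\<bar> \<le> 4 * (D + 1)" for s
  proof -
    have Delta1_u: "Delta1 (\<lambda>s. R0 s - sgn (R0 s)) s = u (s + 1) - 2 * u s + u (s - 1)"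
      by (simp add: Delta1_def u_def)
    show ?thesis unfolding Delta1_u using u_bound[of "s + 1"] u_bound[of s] u_bound[of "s - 1"]
      by (simp add: abs_le_iff)
  qed
  have ordered: "\<bar>deriv R0 v - deriv R0 u\<bar> \<le> 4 * (D + 1) / c0\<^sup>2 * (v - u)" if uv: "u \<le> v" for u v
  proof -
    have c0_sq: "0 < c0\<^sup>2" using c0 by simp
    have "c0\<^sup>2 * \<bar>deriv R0 v - deriv R0 u\<bar> \<le> c\<^sup>2 * \<bar>deriv R0 v - deriv R0 u\<bar>"
      using c0 by (intro mult_right_mono power_mono) auto
    also have "\<dots> = \<bar>c\<^sup>2 * (deriv R0 v - deriv R0 u)\<bar>" by (simp add: abs_mult)
    also have "\<dots> = \<bar>integral {u..v} (Delta1 (\<lambda>s. R0 s - sgn (R0 s)))\<bar>"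
      using wave uv by (simp add: solves_wave_def)
    also have "\<dots> \<le> integral {u..v} (\<lambda>s. 4 * (D + 1))"
      by (rule abs_integral_le[OF force_bound]) auto
    also have "\<dots> = 4 * (D + 1) * (v - u)" using uv by simp
    finally have "c0\<^sup>2 * \<bar>deriv R0 v - deriv R0 u\<bar> \<le> 4 * (D + 1) * (v - u)" .
    then show ?thesis using c0_sq by (simp add: pos_le_divide_eq mult.commute)
  qed
  show ?thesis
    using ordered[of x y] ordered[of y x] by (cases "x \<le> y") (simp_all add: abs_minus_commute)
qed

lemma W2inf_sgn_profile:
  fixes f :: "real \<Rightarrow> real" and x0 r d :: real
  assumes W2: "W2inf f" and zero: "f 0 = 0" and x0: "0 < x0" and r: "0 \<le> r" and d: "0 \<le> d"
    and right: "\<And>x. x > x0 \<Longrightarrow> f x > r" and left: "\<And>x. x < - x0 \<Longrightarrow> f x < - r"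
    and slope: "\<And>x. \<bar>x\<bar> < x0 \<Longrightarrow> deriv f x > d"
  shows "sgn (f x) = sgn x"
proof (rule sgn_eq_of_crossing[of f "deriv f" "- x0" x0])
  show "(f has_real_derivative deriv f x) (at x)" for x
    using W2 by (auto simp: W2inf_def DERIV_deriv_iff_real_differentiable)
  show "deriv f x > 0" if "- x0 < x" "x < x0" for x
    using slope[of x] that d by (simp add: abs_less_iff)
qed (use zero x0 right left r in \<open>force+\<close>)

lemma admissible_defect_bounds:
  fixes Psi dPsi R0 S :: "real \<Rightarrow> real" and \<delta> C d K0 :: real
  assumes Psi_deriv: "\<And>r. (Psi has_real_derivative dPsi r) (at r)"
    and dPsi_cont: "continuous_on UNIV dPsi"
    and dPsi_sgn: "\<And>r. \<bar>r\<bar> \<ge> \<delta> \<Longrightarrow> dPsi r = sgn r"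
    and dPsi_bound: "\<And>r. \<bar>dPsi r\<bar> \<le> C"
    and dPsi_balanced: "integral UNIV (\<lambda>r. dPsi r - sgn r) = 0"
    and \<delta>_pos: "\<delta> > 0"
    and R0: "W2inf R0" "R0 0 = 0" "\<And>x. sgn (R0 x) = sgn x"
    and R0_lipschitz: "\<And>x y. \<bar>deriv R0 y - deriv R0 x\<bar> \<le> K0 * \<bar>y - x\<bar>"
    and d: "0 < d" "d < deriv R0 0"
    and S: "S \<in> Xspace" and adm: "admissible \<delta> R0 S"
  shows "supnorm (Aop (\<lambda>x. dPsi (R0 x + S x) - sgn (R0 x))) \<le> 4 * (C + 1) / d * \<delta>"
    and "supnorm (Aop (Aop (\<lambda>x. dPsi (R0 x + S x) - sgn (R0 x))))
           \<le> 16 * (C + 1) / d\<^sup>2 * (2 * (K0 + d2norm S) / d + 2) * \<delta>\<^sup>2"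
proof -
  obtain xm xp where xs: "xm < 0" "0 < xp" "R0 xm + S xm = - \<delta>" "R0 xp + S xp = \<delta>"
    and left: "\<And>x. x < xm \<Longrightarrow> R0 x + S x < - \<delta>" and right: "\<And>x. x > xp \<Longrightarrow> R0 x + S x > \<delta>"
    and slope: "\<And>x. xm < x \<Longrightarrow> x < xp \<Longrightarrow> deriv R0 0 / 2 < deriv R0 x + deriv S x"
    using adm unfolding admissible_def by auto
  have S_W2: "W2inf S" and S_zero: "S 0 = 0" using S by (auto simp: Xspace_def)
  have derivs: "(f has_real_derivative deriv f x) (at x)" if "W2inf f" for f x
    using that by (auto simp: W2inf_def DERIV_deriv_iff_real_differentiable)
  interpret transition_layer Psi dPsi "\<lambda>x. R0 x + S x" "\<lambda>x. deriv R0 x + deriv S x"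
    \<delta> C "d / 2" "K0 + d2norm S" xm xp
  proof
    show "((\<lambda>x. R0 x + S x) has_real_derivative deriv R0 x + deriv S x) (at x)" for x
      by (intro DERIV_add derivs R0(1) S_W2)
    show "\<bar>(deriv R0 y + deriv S y) - (deriv R0 x + deriv S x)\<bar> \<le> (K0 + d2norm S) * \<bar>y - x\<bar>"
      for x y
    proof -
      have "\<bar>(deriv R0 y + deriv S y) - (deriv R0 x + deriv S x)\<bar>
          \<le> \<bar>deriv R0 y - deriv R0 x\<bar> + \<bar>deriv S y - deriv S x\<bar>"
        using abs_triangle_ineq[of "deriv R0 y - deriv R0 x" "deriv S y - deriv S x"]
        by (simp add: algebra_simps)
      then show ?thesis
        using R0_lipschitz[of x y] R0_lipschitz[of y x] d2norm_lipschitz(2)[OF S_W2, of y x]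
        by (simp add: distrib_right)
    qed
    show "d / 2 < deriv R0 x + deriv S x" if "xm < x" "x < xp" for x
      using slope[OF that] d by linarith
  qed (fact Psi_deriv dPsi_cont dPsi_sgn dPsi_bound dPsi_balanced \<delta>_pos xs left right
      | use R0(2) S_zero d in simp)+
  have G_eq: "(\<lambda>x. dPsi (R0 x + S x) - sgn (R0 x)) = G" by (simp add: G_def[abs_def] R0(3))
  show "supnorm (Aop (\<lambda>x. dPsi (R0 x + S x) - sgn (R0 x))) \<le> 4 * (C + 1) / d * \<delta>"
    unfolding G_eq by (intro supnorm_le order_trans[OF average_bound]) (simp add: algebra_simps)
  show "supnorm (Aop (Aop (\<lambda>x. dPsi (R0 x + S x) - sgn (R0 x))))
           \<le> 16 * (C + 1) / d\<^sup>2 * (2 * (K0 + d2norm S) / d + 2) * \<delta>\<^sup>2"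
  proof (unfold G_eq, intro supnorm_le order_trans[OF double_average_bound])
    have "(K0 + d2norm S) / (d / 2) = 2 * (K0 + d2norm S) / d"
      "(2 * \<delta> / (d / 2))\<^sup>2 = 16 * \<delta>\<^sup>2 / d\<^sup>2"
      using d by (simp_all add: power_divide)
    then have "A * ((K0 + d2norm S) / (d / 2) + 2) * (2 * \<delta> / (d / 2))\<^sup>2
        = 16 * A / d\<^sup>2 * (2 * (K0 + d2norm S) / d + 2) * \<delta>\<^sup>2" for A
      by simp
    from this[of "C + 1"]
    show "(C + 1) * ((K0 + d2norm S) / (d / 2) + 2) * (2 * \<delta> / (d / 2))\<^sup>2
        \<le> 16 * (C + 1) / d\<^sup>2 * (2 * (K0 + d2norm S) / d + 2) * \<delta>\<^sup>2"
      by linarith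
  qed
qed

lemma constant_absorption:
  fixes M K0 N d \<delta> :: real
  assumes M: "0 \<le> M" and K0: "0 \<le> K0" and N: "0 \<le> N" and d: "0 < d" and \<delta>: "0 < \<delta>"
  defines "C_G \<equiv> 4 * M / d + 16 * M / d\<^sup>2 * (2 * K0 / d + 2 + 2 / d)"
  shows "4 * M / d * \<delta> \<le> C_G * \<delta>"
    and "16 * M / d\<^sup>2 * (2 * (K0 + N) / d + 2) * \<delta>\<^sup>2 \<le> C_G * (1 + N) * \<delta>\<^sup>2"
proof -
  have second_nonneg: "0 \<le> 16 * M / d\<^sup>2 * (2 * K0 / d + 2 + 2 / d)" using M K0 d by simp
  then show "4 * M / d * \<delta> \<le> C_G * \<delta>"
    using \<delta> by (intro mult_right_mono) (simp_all add: C_G_def)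
  have "2 * (K0 + N) / d + 2 \<le> (2 * K0 / d + 2 + 2 / d) * (1 + N)"
  proof -
    have "(2 * K0 / d + 2 + 2 / d) * (1 + N) = 2 * (K0 + N) / d + 2 + 2 / d + (2 * K0 / d + 2) * N"
      using d by (simp add: field_simps)
    moreover have "0 \<le> 2 / d + (2 * K0 / d + 2) * N" using d K0 N by simp
    ultimately show ?thesis by linarith
  qed
  then have "16 * M / d\<^sup>2 * (2 * (K0 + N) / d + 2) \<le> 16 * M / d\<^sup>2 * (2 * K0 / d + 2 + 2 / d) * (1 + N)"
    using M d by (subst mult.assoc, intro mult_left_mono) auto
  also have "\<dots> \<le> C_G * (1 + N)" using M d N by (intro mult_right_mono) (auto simp: C_G_def)
  finally show "16 * M / d\<^sup>2 * (2 * (K0 + N) / d + 2) * \<delta>\<^sup>2 \<le> C_G * (1 + N) * \<delta>\<^sup>2"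
    by (rule mult_right_mono) simp
qed

theorem corollary3p4:
  fixes Psi dPsi ddPsi :: "real \<Rightarrow> real \<Rightarrow> real"
    and C_Psi c0 c1 x0 r0 d0 D0 :: real
    and k :: "real \<Rightarrow> real"
    and Rbar :: "real \<Rightarrow> real \<Rightarrow> real"
    and U :: "real \<Rightarrow> (real \<times> real) set"
    and alpham betam :: "real \<Rightarrow> real"
  assumes Psi_C2: "\<And>\<delta> r. \<delta> > 0 \<Longrightarrow> (Psi \<delta> has_real_derivative dPsi \<delta> r) (at r)"
    and dPsi_deriv: "\<And>\<delta> r. \<delta> > 0 \<Longrightarrow> (dPsi \<delta> has_real_derivative ddPsi \<delta> r) (at r)"
    and ddPsi_cont: "\<And>\<delta>. \<delta> > 0 \<Longrightarrow> continuous_on UNIV (ddPsi \<delta>)"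
    and dPsi_outside: "\<And>\<delta> r. \<delta> > 0 \<Longrightarrow> \<bar>r\<bar> \<ge> \<delta> \<Longrightarrow> dPsi \<delta> r = sgn r"
    and dPsi_bound: "\<And>\<delta> r. \<delta> > 0 \<Longrightarrow> \<bar>dPsi \<delta> r\<bar> \<le> C_Psi"
    and ddPsi_bound: "\<And>\<delta> r. \<delta> > 0 \<Longrightarrow> \<bar>ddPsi \<delta> r\<bar> \<le> C_Psi / \<delta>"
    and I_zero: "\<And>\<delta>. \<delta> > 0 \<Longrightarrow> integral UNIV (\<lambda>r. dPsi \<delta> r - sgn r) / 2 = 0"
    and c0: "0 < c0" "c0 < 1"
    and consts_pos: "x0 > 0" "r0 > 0" "d0 > 0" "D0 > 0"
    and k_sol: "\<And>c. c0 \<le> c \<Longrightarrow> c < 1 \<Longrightarrow> k c > 0 \<and> afun (k c) = c"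
    and k_unique: "\<And>c \<kappa>. c0 \<le> c \<Longrightarrow> c < 1 \<Longrightarrow> \<kappa> > 0 \<Longrightarrow> afun \<kappa> = c \<Longrightarrow> \<kappa> = k c"
    and U_open: "\<And>c. c0 \<le> c \<Longrightarrow> c < 1 \<Longrightarrow> open (U c) \<and> (0, 0) \<in> U c"
    and Rbar_plus: "\<And>c. c0 \<le> c \<Longrightarrow> c < 1 \<Longrightarrow> \<exists>l. (Rbar c \<longlongrightarrow> l) at_top"
    and Rbar_minus: "\<And>c. c0 \<le> c \<Longrightarrow> c < 1 \<Longrightarrow>
       \<exists>l. ((\<lambda>x. Rbar c x - alpham c * (cos (k c * x) - 1) - betam c * sin (k c * x)) \<longlongrightarrow> l) at_bot"
    and fam_W2: "\<And>c R0. c0 \<le> c \<Longrightarrow> c < 1 \<Longrightarrow> R0 \<in> Rfam (Rbar c) (k c) (U c) \<Longrightarrow> W2inf R0"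
    and fam_zero: "\<And>c R0. c0 \<le> c \<Longrightarrow> c < 1 \<Longrightarrow> R0 \<in> Rfam (Rbar c) (k c) (U c) \<Longrightarrow> R0 0 = 0"
    and fam_ode: "\<And>c R0. c0 \<le> c \<Longrightarrow> c < 1 \<Longrightarrow> R0 \<in> Rfam (Rbar c) (k c) (U c) \<Longrightarrow> solves_wave c R0"
    and fam_bound: "\<And>c R0 x. c0 \<le> c \<Longrightarrow> c < 1 \<Longrightarrow> R0 \<in> Rfam (Rbar c) (k c) (U c) \<Longrightarrow>
       \<bar>R0 x\<bar> \<le> D0 / (1 - c\<^sup>2)"
    and fam_pos: "\<And>c R0 x. c0 \<le> c \<Longrightarrow> c < 1 \<Longrightarrow> R0 \<in> Rfam (Rbar c) (k c) (U c) \<Longrightarrow>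
       x > x0 \<Longrightarrow> R0 x > r0"
    and fam_neg: "\<And>c R0 x. c0 \<le> c \<Longrightarrow> c < 1 \<Longrightarrow> R0 \<in> Rfam (Rbar c) (k c) (U c) \<Longrightarrow>
       x < - x0 \<Longrightarrow> R0 x < - r0"
    and fam_slope: "\<And>c R0 x. c0 \<le> c \<Longrightarrow> c < 1 \<Longrightarrow> R0 \<in> Rfam (Rbar c) (k c) (U c) \<Longrightarrow>
       \<bar>x\<bar> < x0 \<Longrightarrow> deriv R0 x > d0"
    and c1: "c0 < c1" "c1 < 1"
  shows "\<exists>C_G. \<forall>\<delta> > 0. \<forall>c \<in> {c0..c1}. \<forall>R0 \<in> Rfam (Rbar c) (k c) (U c). \<forall>S \<in> Xspace.
           admissible \<delta> R0 S \<longrightarrow>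
             (let G = (\<lambda>x. dPsi \<delta> (R0 x + S x) - sgn (R0 x)) in
                supnorm (Aop G) \<le> C_G * \<delta> \<and>
                supnorm (Aop (Aop G)) \<le> C_G * (1 + d2norm S) * \<delta>\<^sup>2)"
proof -
  define D where "D = D0 / (1 - c1\<^sup>2)"
  define K0 where "K0 = 4 * (D + 1) / c0\<^sup>2"
  define M where "M = C_Psi + 1"
  define C_G where "C_G = 4 * M / d0 + 16 * M / d0\<^sup>2 * (2 * K0 / d0 + 2 + 2 / d0)"
  have c1_sq: "0 < 1 - c1\<^sup>2" using c0 c1 by (simp add: abs_square_less_1)
  have M: "0 \<le> M" using dPsi_bound[of 1 0] by (simp add: M_def)
  have K0: "0 \<le> K0" using c1_sq consts_pos by (simp add: K0_def D_def)
  have key: "supnorm (Aop G) \<le> C_G * \<delta> \<and> supnorm (Aop (Aop G)) \<le> C_G * (1 + d2norm S) * \<delta>\<^sup>2"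
    if \<delta>: "\<delta> > 0" and "c \<in> {c0..c1}" and R0: "R0 \<in> Rfam (Rbar c) (k c) (U c)"
      and S: "S \<in> Xspace" and adm: "admissible \<delta> R0 S"
      and G: "G = (\<lambda>x. dPsi \<delta> (R0 x + S x) - sgn (R0 x))" for \<delta> c R0 S G
  proof -
    have c: "c0 \<le> c" "c < 1" "c\<^sup>2 \<le> c1\<^sup>2" using that(2) c0 c1 by (auto intro: power_mono)
    have R0_bound: "\<bar>R0 s\<bar> \<le> D" for s
    proof -
      have "D0 / (1 - c\<^sup>2) \<le> D"
        unfolding D_def using c(3) c1_sq consts_pos by (intro divide_left_mono) auto
      then show ?thesis using fam_bound[OF c(1,2) R0, of s] by linarith
    qed
    have R0_sgn: "sgn (R0 x) = sgn x" for x
      using W2inf_sgn_profile[OF fam_W2[OF c(1,2) R0] fam_zero[OF c(1,2) R0] consts_pos(1) _ _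
          fam_pos[OF c(1,2) R0] fam_neg[OF c(1,2) R0] fam_slope[OF c(1,2) R0]] consts_pos by simp
    have dPsi_cont: "continuous_on UNIV (dPsi \<delta>)"
      using dPsi_deriv[OF \<delta>] by (meson DERIV_isCont continuous_at_imp_continuous_on)
    have balanced: "integral UNIV (\<lambda>r. dPsi \<delta> r - sgn r) = 0" using I_zero[OF \<delta>] by simp
    have R0_lipschitz: "\<bar>deriv R0 y - deriv R0 x\<bar> \<le> K0 * \<bar>y - x\<bar>" for x y
      unfolding K0_def by (rule wave_derivative_lipschitz[OF fam_ode[OF c(1,2) R0] c0(1) c(1) R0_bound])
    have slope0: "d0 < deriv R0 0" using fam_slope[OF c(1,2) R0, of 0] consts_pos by simp
    note bounds = admissible_defect_bounds[OF Psi_C2[OF \<delta>] dPsi_cont dPsi_outside[OF \<delta>]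
        dPsi_bound[OF \<delta>] balanced \<delta> fam_W2[OF c(1,2) R0] fam_zero[OF c(1,2) R0] R0_sgn
        R0_lipschitz consts_pos(3) slope0 S adm, folded M_def G]
    have "0 \<le> d2norm S" using S by (simp add: Xspace_def d2norm_lipschitz(1))
    from constant_absorption[OF M K0 this consts_pos(3) \<delta>, folded C_G_def] bounds
    show ?thesis by linarith
  qed
  show ?thesis unfolding Let_def using key by blast
qed

end
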